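(* Let $\Omega$ be a domain in $S^m\times S^n$ and let $g(r,p,q)$ be a positive smooth function on $\mathbb R^3$ such that, for some constant $r_0$, $g_r>0$ whenever $r\le r_0$. For smooth $w$ with $M(w)$ positive definite set $G(w)=\det M(w)\,[g(w,|\nabla_x w|^2,|\nabla_y w|^2)]^{-1}$. Let $u,v$ be smooth functions on $\bar\Omega$ with $M(u),M(v)$ positive definite, $u,v\le r_0$ and $G(u)\le G(v)$ in $\Omega$. Then either $v-\sup_{\partial\Omega}(v-u)\le u$ in $\Omega$, or $v\le u$ in $\Omega$.
   Context: $S^m\times S^n$ carries the product of standard unit-sphere metrics; with local orthonormal frames $e_1,\dots,e_m$ of $S^m$ and $e_{m+1},\dots,e_{m+n}$ of $S^n$, indices $i,j\in\{1,\dots,m\}$, $\alpha,\beta\in\{m+1,\dots,m+n\}$, and $w_A,w_{AB}$ covariant derivatives. $|\nabla_x w|^2=\sum_i w_i^2$, $|\nabla_y w|^2=\sum_\alpha w_\alpha^2$. $M(w)$ is the symmetric matrix with $M(w)_{ij}=w_{ij}-w_iw_j-\delta_{ij}$, $M(w)_{i\alpha}=w_{i\alpha}$, $M(w)_{\alpha\beta}=w_{\alpha\beta}+w_\alpha w_\beta+\delta_{\alpha\beta}$. *)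

theory Defs
  imports "HOL-Analysis.Analysis"
begin

text \<open>Points of S^m x S^n are modelled inside R^(m+1) x R^(n+1) = real^'a x real^'b,
  with m+1 = CARD('a), n+1 = CARD('b).\<close>

definition sphere_prod :: "((real^'a) \<times> (real^'b)) set" where
  "sphere_prod = sphere 0 1 \<times> sphere 0 1"

definition tangent :: "(real^'a) \<times> (real^'b) \<Rightarrow> ((real^'a) \<times> (real^'b)) set" where
  "tangent p = {(a, b). a \<bullet> fst p = 0 \<and> b \<bullet> snd p = 0}"

fun Ck_on :: "nat \<Rightarrow> 'v::euclidean_space set \<Rightarrow> ('v \<Rightarrow> real) \<Rightarrow> bool" where
  "Ck_on 0 S f = continuous_on S f"
| "Ck_on (Suc k) S f =
     (f differentiable_on S \<and> (\<forall>h. Ck_on k S (\<lambda>p. frechet_derivative f (at p) h)))"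

definition smooth_on :: "'v::euclidean_space set \<Rightarrow> ('v \<Rightarrow> real) \<Rightarrow> bool" where
  "smooth_on S f \<longleftrightarrow> open S \<and> (\<forall>k. Ck_on k S f)"

definition D1 :: "((real^'a) \<times> (real^'b) \<Rightarrow> real) \<Rightarrow> (real^'a) \<times> (real^'b) \<Rightarrow> (real^'a) \<times> (real^'b) \<Rightarrow> real" where
  "D1 w p h = frechet_derivative w (at p) h"

definition D2 :: "((real^'a) \<times> (real^'b) \<Rightarrow> real) \<Rightarrow> (real^'a) \<times> (real^'b)
                   \<Rightarrow> (real^'a) \<times> (real^'b) \<Rightarrow> (real^'a) \<times> (real^'b) \<Rightarrow> real" where
  "D2 w p h k = frechet_derivative (\<lambda>q. D1 w q h) (at p) k"

definition amb_grad_x :: "((real^'a) \<times> (real^'b) \<Rightarrow> real) \<Rightarrow> (real^'a) \<times> (real^'b) \<Rightarrow> real^'a" where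
  "amb_grad_x w p = (\<Sum>i\<in>Basis. D1 w p (i, 0) *\<^sub>R i)"

definition amb_grad_y :: "((real^'a) \<times> (real^'b) \<Rightarrow> real) \<Rightarrow> (real^'a) \<times> (real^'b) \<Rightarrow> real^'b" where
  "amb_grad_y w p = (\<Sum>i\<in>Basis. D1 w p (0, i) *\<^sub>R i)"

definition grad_x :: "((real^'a) \<times> (real^'b) \<Rightarrow> real) \<Rightarrow> (real^'a) \<times> (real^'b) \<Rightarrow> real^'a" where
  "grad_x w p = amb_grad_x w p - (amb_grad_x w p \<bullet> fst p) *\<^sub>R fst p"

definition grad_y :: "((real^'a) \<times> (real^'b) \<Rightarrow> real) \<Rightarrow> (real^'a) \<times> (real^'b) \<Rightarrow> real^'b" where
  "grad_y w p = amb_grad_y w p - (amb_grad_y w p \<bullet> snd p) *\<^sub>R snd p"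

definition hess :: "((real^'a) \<times> (real^'b) \<Rightarrow> real) \<Rightarrow> (real^'a) \<times> (real^'b)
                   \<Rightarrow> (real^'a) \<times> (real^'b) \<Rightarrow> (real^'a) \<times> (real^'b) \<Rightarrow> real" where
  "hess w p X Y = D2 w p X Y
      - (fst X \<bullet> fst Y) * (fst p \<bullet> amb_grad_x w p)
      - (snd X \<bullet> snd Y) * (snd p \<bullet> amb_grad_y w p)"

text \<open>The symmetric form M(w): M_ij = w_ij - w_i w_j - delta_ij, M_ia = w_ia,
  M_ab = w_ab + w_a w_b + delta_ab.\<close>
definition Mform :: "((real^'a) \<times> (real^'b) \<Rightarrow> real) \<Rightarrow> (real^'a) \<times> (real^'b)
                   \<Rightarrow> (real^'a) \<times> (real^'b) \<Rightarrow> (real^'a) \<times> (real^'b) \<Rightarrow> real" where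
  "Mform w p X Y = hess w p X Y
      - (grad_x w p \<bullet> fst X) * (grad_x w p \<bullet> fst Y) - fst X \<bullet> fst Y
      + (grad_y w p \<bullet> snd X) * (grad_y w p \<bullet> snd Y) + snd X \<bullet> snd Y"

definition M_posdef :: "((real^'a) \<times> (real^'b) \<Rightarrow> real) \<Rightarrow> (real^'a) \<times> (real^'b) \<Rightarrow> bool" where
  "M_posdef w p \<longleftrightarrow> (\<forall>X\<in>tangent p. X \<noteq> 0 \<longrightarrow> Mform w p X X > 0)"

definition tdim :: "('a::finite \<times> 'b::finite) itself \<Rightarrow> nat" where
  "tdim _ = CARD('a) + CARD('b) - 2"

definition is_onframe :: "(real^'a) \<times> (real^'b) \<Rightarrow> (nat \<Rightarrow> (real^'a) \<times> (real^'b)) \<Rightarrow> bool" where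
  "is_onframe p e \<longleftrightarrow>
     (\<forall>i<tdim TYPE('a \<times> 'b). e i \<in> tangent p) \<and>
     (\<forall>i<tdim TYPE('a \<times> 'b). \<forall>j<tdim TYPE('a \<times> 'b). e i \<bullet> e j = (if i = j then 1 else 0)) \<and>
     span (e ` {..<tdim TYPE('a \<times> 'b)}) = tangent p"

text \<open>det M(w) computed in a (any) local orthonormal frame; Leibniz formula.\<close>
definition detM :: "((real^'a) \<times> (real^'b) \<Rightarrow> real) \<Rightarrow> (real^'a) \<times> (real^'b) \<Rightarrow> real" where
  "detM w p = (let e = (SOME e. is_onframe p e); d = tdim TYPE('a \<times> 'b) in
     (\<Sum>\<sigma> | \<sigma> permutes {..<d}. of_int (sign \<sigma>) * (\<Prod>i<d. Mform w p (e i) (e (\<sigma> i)))))"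

definition sq_grad_x :: "((real^'a) \<times> (real^'b) \<Rightarrow> real) \<Rightarrow> (real^'a) \<times> (real^'b) \<Rightarrow> real" where
  "sq_grad_x w p = (norm (grad_x w p))\<^sup>2"

definition sq_grad_y :: "((real^'a) \<times> (real^'b) \<Rightarrow> real) \<Rightarrow> (real^'a) \<times> (real^'b) \<Rightarrow> real" where
  "sq_grad_y w p = (norm (grad_y w p))\<^sup>2"

definition Gop :: "(real \<Rightarrow> real \<Rightarrow> real \<Rightarrow> real) \<Rightarrow> ((real^'a) \<times> (real^'b) \<Rightarrow> real)
                   \<Rightarrow> (real^'a) \<times> (real^'b) \<Rightarrow> real" where
  "Gop g w p = detM w p / g (w p) (sq_grad_x w p) (sq_grad_y w p)"

end

theory Submission
  imports Defs "Jordan_Normal_Form.Determinant"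
begin

text \<open>Suppose neither alternative holds and let \<open>p\<close> maximise \<open>v - u\<close> over the closure of
  \<open>\<Omega>\<close>. The first alternative failing puts \<open>p\<close> inside \<open>\<Omega>\<close>, the second gives \<open>u p < v p\<close>.
  Along curves through \<open>p\<close> on \<open>S\<^sup>m \<times> S\<^sup>n\<close> the first and second order conditions for a maximum
  give \<open>\<nabla>v = \<nabla>u\<close> and \<open>Hess v \<le> Hess u\<close> at \<open>p\<close>; since the gradient terms of \<open>M\<close> then agree,
  \<open>M(v) \<le> M(u)\<close> as quadratic forms with \<open>M(v)\<close> positive definite, whence
  \<open>0 < det M(v) \<le> det M(u)\<close>. As \<open>g\<close> increases in its first argument below \<open>r\<^sub>0\<close> and
  \<open>u p < v p \<le> r\<^sub>0\<close>, we get \<open>G(v) < G(u)\<close> at \<open>p\<close>, a contradiction.\<close>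

no_notation Matrix.scalar_prod (infix \<open>\<bullet>\<close> 70)
hide_const (open) Matrix.orthogonal
hide_fact (open) Matrix.orthogonal_def

lemma smooth_on_open: "smooth_on W w \<Longrightarrow> open W"
  by (simp add: smooth_on_def)

lemma smooth_on_continuous_on: "smooth_on W w \<Longrightarrow> continuous_on W w"
  unfolding smooth_on_def by (metis Ck_on.simps(1))

lemma smooth_on_frechet_derivative:
  "smooth_on W w \<Longrightarrow> smooth_on W (\<lambda>p. frechet_derivative w (at p) h)"
  unfolding smooth_on_def by (metis Ck_on.simps(2))

lemma smooth_on_has_derivative:
  assumes "smooth_on W w" "q \<in> W"
  shows "(w has_derivative frechet_derivative w (at q)) (at q)"
proof -
  have "w differentiable_on W"
    using assms(1) unfolding smooth_on_def by (metis Ck_on.simps(2))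
  then have "w differentiable at q"
    using assms smooth_on_open differentiable_on_eq_differentiable_at by blast
  then show ?thesis
    using frechet_derivative_works by blast
qed

lemma linear_frechet_derivative_smooth_on:
  "smooth_on W w \<Longrightarrow> q \<in> W \<Longrightarrow> linear (frechet_derivative w (at q))"
  using smooth_on_has_derivative has_derivative_linear by blast

lemma linear_euclidean_expansion:
  fixes f :: "'v::euclidean_space \<Rightarrow> real"
  assumes "linear f"
  shows "f v = (\<Sum>i\<in>Basis. (v \<bullet> i) * f i)"
proof -
  have "f v = f (\<Sum>i\<in>Basis. (v \<bullet> i) *\<^sub>R i)"
    by (simp add: euclidean_representation)
  also have "\<dots> = (\<Sum>i\<in>Basis. (v \<bullet> i) * f i)"
    by (simp add: linear_sum[OF assms] linear_cmul[OF assms])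
  finally show ?thesis .
qed

lemma has_real_derivative_compose_curve:
  fixes f :: "'v::real_normed_vector \<Rightarrow> real"
  assumes "(\<gamma> has_vector_derivative \<gamma>') (at t)" and "(f has_derivative f') (at (\<gamma> t))"
  shows "((\<lambda>s. f (\<gamma> s)) has_real_derivative f' \<gamma>') (at t)"
proof -
  have "linear f'"
    using assms(2) has_derivative_linear by blast
  from has_derivative_compose[OF assms(1)[unfolded has_vector_derivative_def] assms(2)]
  show ?thesis
    by (rule has_derivative_imp_has_field_derivative) (simp add: linear_cmul[OF \<open>linear f'\<close>])
qed

lemma has_real_derivative_along_line:
  fixes f :: "'v::real_normed_vector \<Rightarrow> real"
  assumes "(f has_derivative f') (at (c + s *\<^sub>R v))"
  shows "((\<lambda>t. f (c + t *\<^sub>R v)) has_real_derivative f' v) (at s)"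
proof -
  have "((\<lambda>t. c + t *\<^sub>R v) has_vector_derivative v) (at s)"
    by (auto intro!: derivative_eq_intros)
  from has_real_derivative_compose_curve[OF this] assms show ?thesis
    by simp
qed

section \<open>Symmetry of second derivatives\<close>

lemma second_difference_mvt:
  fixes w :: "'v::euclidean_space \<Rightarrow> real"
  assumes sm: "smooth_on W w" and "0 < t"
    and sub: "\<And>s \<tau>. 0 \<le> s \<Longrightarrow> s \<le> t \<Longrightarrow> 0 \<le> \<tau> \<Longrightarrow> \<tau> \<le> t \<Longrightarrow> p + s *\<^sub>R h + \<tau> *\<^sub>R k \<in> W"
  obtains s \<tau> where "0 < s" "s < t" "0 < \<tau>" "\<tau> < t"
    "w (p + t *\<^sub>R h + t *\<^sub>R k) - w (p + t *\<^sub>R h) - w (p + t *\<^sub>R k) + w p =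
     t\<^sup>2 * frechet_derivative (\<lambda>q. frechet_derivative w (at q) h) (at (p + s *\<^sub>R h + \<tau> *\<^sub>R k)) k"
proof -
  define Dh where "Dh q = frechet_derivative w (at q) h" for q
  have smh: "smooth_on W Dh"
    unfolding Dh_def using smooth_on_frechet_derivative[OF sm] .
  define \<phi> where "\<phi> s = w ((p + t *\<^sub>R k) + s *\<^sub>R h) - w (p + s *\<^sub>R h)" for s
  have "DERIV \<phi> s :> Dh (p + t *\<^sub>R k + s *\<^sub>R h) - Dh (p + s *\<^sub>R h)" if "0 \<le> s" "s \<le> t" for s
  proof -
    have "p + t *\<^sub>R k + s *\<^sub>R h \<in> W" "p + s *\<^sub>R h \<in> W"
      using sub[of s t] sub[of s 0] that \<open>0 < t\<close> by (simp_all add: algebra_simps)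
    then show ?thesis
      unfolding \<phi>_def Dh_def
      by (intro DERIV_diff has_real_derivative_along_line smooth_on_has_derivative[OF sm])
  qed
  from MVT2[OF \<open>0 < t\<close> this] obtain s where s: "0 < s" "s < t"
    and e1: "\<phi> t - \<phi> 0 = (t - 0) * (Dh (p + t *\<^sub>R k + s *\<^sub>R h) - Dh (p + s *\<^sub>R h))"
    by blast
  define \<psi> where "\<psi> \<tau> = Dh ((p + s *\<^sub>R h) + \<tau> *\<^sub>R k)" for \<tau>
  have "DERIV \<psi> \<tau> :> frechet_derivative Dh (at (p + s *\<^sub>R h + \<tau> *\<^sub>R k)) k"
    if "0 \<le> \<tau>" "\<tau> \<le> t" for \<tau>
    unfolding \<psi>_def
    by (intro has_real_derivative_along_line smooth_on_has_derivative[OF smh])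
      (use sub[of s \<tau>] that s in auto)
  from MVT2[OF \<open>0 < t\<close> this] obtain \<tau> where \<tau>: "0 < \<tau>" "\<tau> < t"
    and e2: "\<psi> t - \<psi> 0 = (t - 0) * frechet_derivative Dh (at (p + s *\<^sub>R h + \<tau> *\<^sub>R k)) k"
    by blast
  have "w (p + t *\<^sub>R h + t *\<^sub>R k) - w (p + t *\<^sub>R h) - w (p + t *\<^sub>R k) + w p = \<phi> t - \<phi> 0"
    unfolding \<phi>_def by (simp add: algebra_simps)
  also have "\<dots> = t * (\<psi> t - \<psi> 0)"
    unfolding e1 \<psi>_def by (simp add: algebra_simps)
  also have "\<dots> = t\<^sup>2 * frechet_derivative Dh (at (p + s *\<^sub>R h + \<tau> *\<^sub>R k)) k"
    unfolding e2 by (simp add: power2_eq_square)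
  finally show ?thesis
    using that s \<tau> unfolding Dh_def by blast
qed

text \<open>Schwarz: both mixed second derivatives are limits of the same second difference
  quotient, by the mean value theorem applied twice.\<close>

lemma frechet_derivative_second_symmetric:
  fixes w :: "'v::euclidean_space \<Rightarrow> real"
  assumes sm: "smooth_on W w" and p: "p \<in> W"
  shows "frechet_derivative (\<lambda>q. frechet_derivative w (at q) h) (at p) k =
         frechet_derivative (\<lambda>q. frechet_derivative w (at q) k) (at p) h"
    (is "?F p = ?G p")
proof (rule ccontr)
  assume ne: "?F p \<noteq> ?G p"
  define e where "e = \<bar>?F p - ?G p\<bar> / 3"
  have "e > 0"
    using ne unfolding e_def by simp
  have "continuous_on W ?F" "continuous_on W ?G"
    using smooth_on_continuous_on[OF smooth_on_frechet_derivative[OF smooth_on_frechet_derivative[OF sm]]]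
    by blast+
  then obtain r1 r2 where r1: "r1 > 0" "\<forall>q\<in>W. dist q p < r1 \<longrightarrow> dist (?F q) (?F p) < e"
    and r2: "r2 > 0" "\<forall>q\<in>W. dist q p < r2 \<longrightarrow> dist (?G q) (?G p) < e"
    using p \<open>e > 0\<close> unfolding continuous_on_iff by blast
  obtain r3 where r3: "r3 > 0" "ball p r3 \<subseteq> W"
    using smooth_on_open[OF sm] p open_contains_ball by blast
  define r where "r = min r1 (min r2 r3)"
  have r: "r > 0" "r \<le> r1" "r \<le> r2" "r \<le> r3"
    using r1 r2 r3 unfolding r_def by auto
  define N where "N = norm h + norm k"
  have "N \<ge> 0"
    by (simp add: N_def)
  define t where "t = r / (2 * (N + 1))"
  have "t > 0"
    using r \<open>N \<ge> 0\<close> by (simp add: t_def)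
  have "t * N \<le> t * (N + 1)"
    using \<open>t > 0\<close> by simp
  also have "\<dots> = r / 2"
    using \<open>N \<ge> 0\<close> by (simp add: t_def field_simps)
  finally have "t * N < r"
    using r by simp
  have near: "dist (p + s *\<^sub>R a + \<tau> *\<^sub>R b) p < r"
    if "0 \<le> s" "s \<le> t" "0 \<le> \<tau>" "\<tau> \<le> t" "norm a + norm b = norm h + norm k" for s \<tau> a b
  proof -
    have "dist (p + s *\<^sub>R a + \<tau> *\<^sub>R b) p \<le> s * norm a + \<tau> * norm b"
      using norm_triangle_ineq[of "s *\<^sub>R a" "\<tau> *\<^sub>R b"] that by (simp add: dist_norm)
    also have "\<dots> \<le> t * norm a + t * norm b"
      using that by (intro add_mono mult_right_mono) auto
    also have "\<dots> = t * N"
      using that(5) unfolding N_def by (metis distrib_left)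
    finally show ?thesis
      using \<open>t * N < r\<close> by linarith
  qed
  have inW: "p + s *\<^sub>R a + \<tau> *\<^sub>R b \<in> W"
    if "0 \<le> s" "s \<le> t" "0 \<le> \<tau>" "\<tau> \<le> t" "norm a + norm b = norm h + norm k" for s \<tau> a b
    using near[OF that] r r3 by (auto simp: dist_commute)
  obtain s1 \<tau>1 where st1: "0 < s1" "s1 < t" "0 < \<tau>1" "\<tau>1 < t"
    and E1: "w (p + t *\<^sub>R h + t *\<^sub>R k) - w (p + t *\<^sub>R h) - w (p + t *\<^sub>R k) + w p
              = t\<^sup>2 * ?F (p + s1 *\<^sub>R h + \<tau>1 *\<^sub>R k)"
    using second_difference_mvt[OF sm \<open>t > 0\<close>, of p h k] inW by blast
  obtain s2 \<tau>2 where st2: "0 < s2" "s2 < t" "0 < \<tau>2" "\<tau>2 < t"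
    and E2: "w (p + t *\<^sub>R k + t *\<^sub>R h) - w (p + t *\<^sub>R k) - w (p + t *\<^sub>R h) + w p
              = t\<^sup>2 * ?G (p + s2 *\<^sub>R k + \<tau>2 *\<^sub>R h)"
    using second_difference_mvt[OF sm \<open>t > 0\<close>, of p k h] inW by (metis add.commute)
  have FG: "?F (p + s1 *\<^sub>R h + \<tau>1 *\<^sub>R k) = ?G (p + s2 *\<^sub>R k + \<tau>2 *\<^sub>R h)"
    using E1 E2 \<open>t > 0\<close> by (simp add: algebra_simps)
  have close_F: "dist (?F (p + s1 *\<^sub>R h + \<tau>1 *\<^sub>R k)) (?F p) < e"
    using r1(2) inW[of s1 \<tau>1 h k] near[of s1 \<tau>1 h k] st1 r by auto
  have close_G: "dist (?G (p + s2 *\<^sub>R k + \<tau>2 *\<^sub>R h)) (?G p) < e"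
    using r2(2) inW[of s2 \<tau>2 k h] near[of s2 \<tau>2 k h] st2 r by (auto simp: add.commute)
  have "\<And>a b c d :: real. \<bar>a - c\<bar> < \<bar>c - d\<bar> / 3 \<Longrightarrow> \<bar>b - d\<bar> < \<bar>c - d\<bar> / 3 \<Longrightarrow> a = b \<Longrightarrow> False"
    by (auto simp: abs_if split: if_splits)
  from this[OF close_F[unfolded e_def dist_real_def] close_G[unfolded e_def dist_real_def] FG]
  show False .
qed

text \<open>The slope of \<open>w \<circ> \<gamma>\<close> in coordinates, so that its derivative follows from the product
  rule.\<close>

definition curve_slope ::
    "('v::euclidean_space \<Rightarrow> real) \<Rightarrow> (real \<Rightarrow> 'v) \<Rightarrow> (real \<Rightarrow> 'v) \<Rightarrow> real \<Rightarrow> real" where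
  "curve_slope w \<gamma> \<gamma>' t = (\<Sum>i\<in>Basis. (\<gamma>' t \<bullet> i) * frechet_derivative w (at (\<gamma> t)) i)"

lemma curve_slope_eq:
  "smooth_on W w \<Longrightarrow> \<gamma> t \<in> W \<Longrightarrow> curve_slope w \<gamma> \<gamma>' t = frechet_derivative w (at (\<gamma> t)) (\<gamma>' t)"
  unfolding curve_slope_def
  by (rule linear_euclidean_expansion[OF linear_frechet_derivative_smooth_on, symmetric])

lemma DERIV_along_curve:
  fixes w :: "'v::euclidean_space \<Rightarrow> real"
  assumes "smooth_on W w" and "(\<gamma> has_vector_derivative \<gamma>' t) (at t)" and "\<gamma> t \<in> W"
  shows "DERIV (\<lambda>t. w (\<gamma> t)) t :> curve_slope w \<gamma> \<gamma>' t"
  using has_real_derivative_compose_curve[OF assms(2) smooth_on_has_derivative[OF assms(1,3)]]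
  by (simp add: curve_slope_eq[of W w \<gamma> t, OF assms(1,3)])

lemma DERIV_curve_slope:
  fixes w :: "'v::euclidean_space \<Rightarrow> real"
  assumes sm: "smooth_on W w" and \<gamma>: "\<And>t. (\<gamma> has_vector_derivative \<gamma>' t) (at t)"
    and \<gamma>': "(\<gamma>' has_vector_derivative \<gamma>'') (at 0)" and inW: "\<gamma> 0 \<in> W"
  shows "DERIV (curve_slope w \<gamma> \<gamma>') 0 :>
     frechet_derivative w (at (\<gamma> 0)) \<gamma>''
     + frechet_derivative (\<lambda>q. frechet_derivative w (at q) (\<gamma>' 0)) (at (\<gamma> 0)) (\<gamma>' 0)"
proof -
  define D2w where "D2w i = frechet_derivative (\<lambda>q. frechet_derivative w (at q) i) (at (\<gamma> 0))" for i
  have coord: "DERIV (\<lambda>t. \<gamma>' t \<bullet> i) 0 :> \<gamma>'' \<bullet> i" for i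
    using bounded_linear.has_derivative[OF bounded_linear_inner_left \<gamma>'[unfolded has_vector_derivative_def]]
    by (rule has_derivative_imp_has_field_derivative) simp
  have fd: "DERIV (\<lambda>t. frechet_derivative w (at (\<gamma> t)) i) 0 :> D2w i (\<gamma>' 0)" for i
    unfolding D2w_def
    using has_real_derivative_compose_curve[OF \<gamma> smooth_on_has_derivative[OF smooth_on_frechet_derivative[OF sm] inW]] .
  have "DERIV (\<lambda>t. (\<gamma>' t \<bullet> i) * frechet_derivative w (at (\<gamma> t)) i) 0 :>
     (\<gamma>'' \<bullet> i) * frechet_derivative w (at (\<gamma> 0)) i + (\<gamma>' 0 \<bullet> i) * D2w i (\<gamma>' 0)" for i
    using DERIV_mult'[OF coord[of i] fd[of i]] by (simp add: add.commute)
  then have "DERIV (curve_slope w \<gamma> \<gamma>') 0 :>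
     (\<Sum>i\<in>Basis. (\<gamma>'' \<bullet> i) * frechet_derivative w (at (\<gamma> 0)) i + (\<gamma>' 0 \<bullet> i) * D2w i (\<gamma>' 0))"
    unfolding curve_slope_def[abs_def] by (rule DERIV_sum)
  moreover have "(\<Sum>i\<in>Basis. (\<gamma>' 0 \<bullet> i) * D2w i (\<gamma>' 0)) = D2w (\<gamma>' 0) (\<gamma>' 0)"
  proof -
    have "(\<Sum>i\<in>Basis. (\<gamma>' 0 \<bullet> i) * D2w i (\<gamma>' 0)) = (\<Sum>i\<in>Basis. (\<gamma>' 0 \<bullet> i) * D2w (\<gamma>' 0) i)"
      unfolding D2w_def using frechet_derivative_second_symmetric[OF sm inW] by simp
    also have "\<dots> = D2w (\<gamma>' 0) (\<gamma>' 0)"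
      unfolding D2w_def
      by (rule linear_euclidean_expansion[OF linear_frechet_derivative_smooth_on
            [OF smooth_on_frechet_derivative[OF sm] inW], symmetric])
    finally show ?thesis .
  qed
  moreover have "(\<Sum>i\<in>Basis. (\<gamma>'' \<bullet> i) * frechet_derivative w (at (\<gamma> 0)) i)
      = frechet_derivative w (at (\<gamma> 0)) \<gamma>''"
    by (rule linear_euclidean_expansion[OF linear_frechet_derivative_smooth_on[OF sm inW], symmetric])
  ultimately show ?thesis
    unfolding D2w_def by (simp add: sum.distrib)
qed

lemma local_max_second_derivative_test:
  fixes H H' :: "real \<Rightarrow> real"
  assumes "0 < d" and max: "\<And>t. \<bar>t\<bar> < d \<Longrightarrow> H t \<le> H 0"
    and H: "\<And>t. \<bar>t\<bar> < d \<Longrightarrow> DERIV H t :> H' t" and H': "DERIV H' 0 :> L"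
  shows "H' 0 = 0 \<and> L \<le> 0"
proof -
  have "H' 0 = 0"
    by (rule DERIV_local_max[OF H[of 0] \<open>0 < d\<close>]) (use assms in auto)
  moreover have "L \<le> 0"
  proof (rule ccontr)
    assume "\<not> L \<le> 0"
    then obtain e where e: "e > 0" "\<And>h. h > 0 \<Longrightarrow> h < e \<Longrightarrow> H' 0 < H' (0 + h)"
      using DERIV_pos_inc_right[OF H'] by force
    define h where "h = min e d / 2"
    have h: "0 < h" "h < e" "h < d"
      using e \<open>0 < d\<close> unfolding h_def by auto
    obtain z where z: "0 < z" "z < h" "H h - H 0 = (h - 0) * H' z"
      using MVT2[OF h(1), of H H'] H h by force
    have "H' z > 0"
      using e(2)[of z] z h \<open>H' 0 = 0\<close> by simp
    with h have "h * H' z > 0"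
      by simp
    with z have "H h > H 0"
      by simp
    with max[of h] h show False
      by simp
  qed
  ultimately show ?thesis ..
qed

section \<open>Curves on products of spheres\<close>

definition unit_scale :: "real \<Rightarrow> real \<Rightarrow> real" where
  "unit_scale \<alpha> t = inverse (sqrt (1 + \<alpha> * t\<^sup>2))"

lemma unit_scale_0 [simp]: "unit_scale \<alpha> 0 = 1"
  by (simp add: unit_scale_def)

lemma unit_scale_deriv:
  assumes "0 \<le> \<alpha>"
  shows "DERIV (unit_scale \<alpha>) t :> - \<alpha> * t * (unit_scale \<alpha> t) ^ 3"
proof -
  define q where "q = 1 + \<alpha> * t\<^sup>2"
  have "0 < q"
    using assms by (simp add: q_def add_pos_nonneg)
  then have "DERIV (\<lambda>t. inverse (sqrt (1 + \<alpha> * t\<^sup>2))) t :> - \<alpha> * t * (inverse (sqrt q)) ^ 3"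
    by (auto intro!: derivative_eq_intros simp: q_def[symmetric] power3_eq_cube field_simps)
  then show ?thesis
    unfolding unit_scale_def q_def by simp
qed

text \<open>For a unit vector \<open>x\<close> and \<open>a \<perp> x\<close>, the normalisation of \<open>x + t a\<close> runs on the unit sphere
  through \<open>x\<close> with velocity \<open>a\<close> and acceleration \<open>-|a|\<^sup>2 x\<close> at \<open>t = 0\<close>; this acceleration
  produces the curvature terms of the covariant Hessian.\<close>

definition sphere_curve :: "'v::real_inner \<Rightarrow> 'v \<Rightarrow> real \<Rightarrow> 'v" where
  "sphere_curve x a t = unit_scale ((norm a)\<^sup>2) t *\<^sub>R (x + t *\<^sub>R a)"

definition sphere_curve_vel :: "'v::real_inner \<Rightarrow> 'v \<Rightarrow> real \<Rightarrow> 'v" where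
  "sphere_curve_vel x a t =
     (- (norm a)\<^sup>2 * t * (unit_scale ((norm a)\<^sup>2) t) ^ 3) *\<^sub>R (x + t *\<^sub>R a)
     + unit_scale ((norm a)\<^sup>2) t *\<^sub>R a"

lemma sphere_curve_0 [simp]: "sphere_curve x a 0 = x"
  and sphere_curve_vel_0 [simp]: "sphere_curve_vel x a 0 = a"
  by (simp_all add: sphere_curve_def sphere_curve_vel_def)

lemma norm_sphere_curve:
  assumes "norm x = 1" and "x \<bullet> a = 0"
  shows "norm (sphere_curve x a t) = 1"
proof -
  have "(norm (x + t *\<^sub>R a))\<^sup>2 = (x + t *\<^sub>R a) \<bullet> (x + t *\<^sub>R a)"
    by (simp only: power2_norm_eq_inner)
  also have "\<dots> = x \<bullet> x + 2 * t * (x \<bullet> a) + t\<^sup>2 * (a \<bullet> a)"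
    by (simp add: inner_add_left inner_add_right inner_commute algebra_simps power2_eq_square)
  also have "\<dots> = 1 + (norm a)\<^sup>2 * t\<^sup>2"
    using assms by (simp add: power2_norm_eq_inner[symmetric])
  finally have "(norm (x + t *\<^sub>R a))\<^sup>2 = 1 + (norm a)\<^sup>2 * t\<^sup>2" .
  then have "norm (x + t *\<^sub>R a) = sqrt (1 + (norm a)\<^sup>2 * t\<^sup>2)"
    by (metis norm_ge_zero real_sqrt_unique)
  moreover have "0 < 1 + (norm a)\<^sup>2 * t\<^sup>2"
    by (simp add: add_pos_nonneg)
  ultimately show ?thesis
    by (simp add: sphere_curve_def unit_scale_def)
qed

lemma sphere_curve_has_vector_derivative:
  "(sphere_curve x a has_vector_derivative sphere_curve_vel x a t) (at t)"
  unfolding sphere_curve_def[abs_def] sphere_curve_vel_def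
  using unit_scale_deriv[of "(norm a)\<^sup>2"]
  by (auto intro!: derivative_eq_intros simp: algebra_simps)

lemma sphere_curve_vel_has_vector_derivative:
  "(sphere_curve_vel x a has_vector_derivative (- (norm a)\<^sup>2) *\<^sub>R x) (at 0)"
  unfolding sphere_curve_vel_def[abs_def]
  using unit_scale_deriv[of "(norm a)\<^sup>2"]
  by (auto intro!: derivative_eq_intros simp: algebra_simps)

definition prod_curve ::
    "(real^'a) \<times> (real^'b) \<Rightarrow> (real^'a) \<times> (real^'b) \<Rightarrow> real \<Rightarrow> (real^'a) \<times> (real^'b)" where
  "prod_curve p X t = (sphere_curve (fst p) (fst X) t, sphere_curve (snd p) (snd X) t)"

definition prod_curve_vel ::
    "(real^'a) \<times> (real^'b) \<Rightarrow> (real^'a) \<times> (real^'b) \<Rightarrow> real \<Rightarrow> (real^'a) \<times> (real^'b)" where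
  "prod_curve_vel p X t = (sphere_curve_vel (fst p) (fst X) t, sphere_curve_vel (snd p) (snd X) t)"

definition prod_curve_acc ::
    "(real^'a) \<times> (real^'b) \<Rightarrow> (real^'a) \<times> (real^'b) \<Rightarrow> (real^'a) \<times> (real^'b)" where
  "prod_curve_acc p X = ((- (norm (fst X))\<^sup>2) *\<^sub>R fst p, (- (norm (snd X))\<^sup>2) *\<^sub>R snd p)"

lemma prod_curve_0 [simp]: "prod_curve p X 0 = p"
  and prod_curve_vel_0 [simp]: "prod_curve_vel p X 0 = X"
  by (simp_all add: prod_curve_def prod_curve_vel_def)

lemma prod_curve_in_sphere_prod:
  "p \<in> sphere_prod \<Longrightarrow> X \<in> tangent p \<Longrightarrow> prod_curve p X t \<in> sphere_prod"
  unfolding sphere_prod_def tangent_def prod_curve_def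
  by (auto intro!: norm_sphere_curve simp: inner_commute)

lemma prod_curve_has_vector_derivative:
  "(prod_curve p X has_vector_derivative prod_curve_vel p X t) (at t)"
  unfolding prod_curve_def[abs_def] prod_curve_vel_def
  by (intro has_vector_derivative_Pair sphere_curve_has_vector_derivative)

lemma prod_curve_vel_has_vector_derivative:
  "(prod_curve_vel p X has_vector_derivative prod_curve_acc p X) (at 0)"
  unfolding prod_curve_vel_def[abs_def] prod_curve_acc_def
  by (intro has_vector_derivative_Pair sphere_curve_vel_has_vector_derivative)

section \<open>First and second order conditions at a maximum\<close>

lemma D1_eq_frechet_derivative: "D1 w q = frechet_derivative w (at q)"
  by (rule ext) (simp add: D1_def)

lemma linear_D1: "smooth_on W w \<Longrightarrow> q \<in> W \<Longrightarrow> linear (D1 w q)"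
  unfolding D1_eq_frechet_derivative by (rule linear_frechet_derivative_smooth_on)

lemma inner_amb_grad_x:
  assumes "smooth_on W w" "q \<in> W"
  shows "c \<bullet> amb_grad_x w q = D1 w q (c, 0)"
proof -
  have "linear (\<lambda>c. (c, 0))"
    by (simp add: linear_iff)
  from linear_compose[OF this linear_D1[OF assms]] have "linear (\<lambda>c. D1 w q (c, 0))"
    by (simp add: o_def)
  have "c \<bullet> amb_grad_x w q = (\<Sum>i\<in>Basis. (c \<bullet> i) * D1 w q (i, 0))"
    unfolding amb_grad_x_def inner_sum_right by (simp add: mult.commute)
  also have "\<dots> = D1 w q (c, 0)"
    by (rule linear_euclidean_expansion[OF \<open>linear (\<lambda>c. D1 w q (c, 0))\<close>, symmetric])
  finally show ?thesis .
qed

lemma inner_amb_grad_y: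
  assumes "smooth_on W w" "q \<in> W"
  shows "c \<bullet> amb_grad_y w q = D1 w q (0, c)"
proof -
  have "linear (\<lambda>c. (0, c))"
    by (simp add: linear_iff)
  from linear_compose[OF this linear_D1[OF assms]] have "linear (\<lambda>c. D1 w q (0, c))"
    by (simp add: o_def)
  have "c \<bullet> amb_grad_y w q = (\<Sum>i\<in>Basis. (c \<bullet> i) * D1 w q (0, i))"
    unfolding amb_grad_y_def inner_sum_right by (simp add: mult.commute)
  also have "\<dots> = D1 w q (0, c)"
    by (rule linear_euclidean_expansion[OF \<open>linear (\<lambda>c. D1 w q (0, c))\<close>, symmetric])
  finally show ?thesis .
qed

lemma DERIV_curve_slope_prod_curve:
  assumes sm: "smooth_on W w" and p: "p \<in> W"
  shows "DERIV (curve_slope w (prod_curve p X) (prod_curve_vel p X)) 0 :> hess w p X X"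
proof -
  have "prod_curve_acc p X = (- (norm (fst X))\<^sup>2) *\<^sub>R (fst p, 0) + (- (norm (snd X))\<^sup>2) *\<^sub>R (0, snd p)"
    by (simp add: prod_curve_acc_def)
  then have "D1 w p (prod_curve_acc p X)
      = (- (norm (fst X))\<^sup>2) * D1 w p (fst p, 0) + (- (norm (snd X))\<^sup>2) * D1 w p (0, snd p)"
    by (simp only: linear_add[OF linear_D1[OF sm p]] linear_cmul[OF linear_D1[OF sm p]] real_scaleR_def)
  then have "frechet_derivative w (at p) (prod_curve_acc p X)
      + frechet_derivative (\<lambda>q. frechet_derivative w (at q) X) (at p) X = hess w p X X"
    unfolding hess_def D2_def D1_eq_frechet_derivative[symmetric] inner_amb_grad_x[OF sm p]
      inner_amb_grad_y[OF sm p]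
    by (simp add: power2_norm_eq_inner inner_commute)
  moreover have "DERIV (curve_slope w (prod_curve p X) (prod_curve_vel p X)) 0 :>
      frechet_derivative w (at p) (prod_curve_acc p X)
      + frechet_derivative (\<lambda>q. frechet_derivative w (at q) X) (at p) X"
    using DERIV_curve_slope[OF sm prod_curve_has_vector_derivative prod_curve_vel_has_vector_derivative] p
    by simp
  ultimately show ?thesis
    by simp
qed

lemma local_max_diff_first_second_order:
  fixes u v :: "(real^'a) \<times> (real^'b) \<Rightarrow> real"
  assumes smu: "smooth_on U u" and smv: "smooth_on V v" and "p \<in> U" "p \<in> V"
    and "p \<in> sphere_prod" and "X \<in> tangent p" and "open T" "p \<in> T"
    and max: "\<And>q. q \<in> T \<Longrightarrow> q \<in> sphere_prod \<Longrightarrow> v q - u q \<le> v p - u p"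
  shows "D1 v p X = D1 u p X" and "hess v p X X \<le> hess u p X X"
proof -
  define W where "W = T \<inter> U \<inter> V"
  have "open W" "p \<in> W"
    using assms smooth_on_open[OF smu] smooth_on_open[OF smv] unfolding W_def by auto
  then obtain e where "e > 0" "ball p e \<subseteq> W"
    using open_contains_ball by blast
  moreover have "continuous (at 0) (prod_curve p X)"
    by (rule has_vector_derivative_continuous[OF prod_curve_has_vector_derivative])
  ultimately obtain d where "d > 0" and d: "\<And>t. dist t 0 < d \<Longrightarrow> dist (prod_curve p X t) p < e"
    unfolding continuous_at_eps_delta by (metis prod_curve_0)
  have inW: "prod_curve p X t \<in> W" if "\<bar>t\<bar> < d" for t
    using d[of t] that \<open>ball p e \<subseteq> W\<close> by (auto simp: dist_commute)
  define \<gamma> \<gamma>' where "\<gamma> = prod_curve p X" and "\<gamma>' = prod_curve_vel p X"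
  have "curve_slope v \<gamma> \<gamma>' 0 - curve_slope u \<gamma> \<gamma>' 0 = 0 \<and> hess v p X X - hess u p X X \<le> 0"
  proof (rule local_max_second_derivative_test[OF \<open>d > 0\<close>, of "\<lambda>t. v (\<gamma> t) - u (\<gamma> t)"])
    fix t :: real
    assume "\<bar>t\<bar> < d"
    then show "v (\<gamma> t) - u (\<gamma> t) \<le> v (\<gamma> 0) - u (\<gamma> 0)"
      using max[of "\<gamma> t"] inW[of t] prod_curve_in_sphere_prod[OF assms(5,6), of t]
      unfolding \<gamma>_def W_def by simp
    show "DERIV (\<lambda>t. v (\<gamma> t) - u (\<gamma> t)) t :> curve_slope v \<gamma> \<gamma>' t - curve_slope u \<gamma> \<gamma>' t"
      using inW[OF \<open>\<bar>t\<bar> < d\<close>] unfolding \<gamma>_def \<gamma>'_def W_def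
      by (intro DERIV_diff DERIV_along_curve[OF smv] DERIV_along_curve[OF smu]
          prod_curve_has_vector_derivative) auto
  next
    show "DERIV (\<lambda>t. curve_slope v \<gamma> \<gamma>' t - curve_slope u \<gamma> \<gamma>' t) 0 :> hess v p X X - hess u p X X"
      unfolding \<gamma>_def \<gamma>'_def
      by (intro DERIV_diff DERIV_curve_slope_prod_curve[OF smv] DERIV_curve_slope_prod_curve[OF smu] assms)
  qed
  moreover have "curve_slope w \<gamma> \<gamma>' 0 = D1 w p X" if "smooth_on W' w" "p \<in> W'" for w W'
    using curve_slope_eq[of W' w \<gamma> 0 \<gamma>'] that by (simp add: \<gamma>_def \<gamma>'_def D1_def)
  ultimately show "D1 v p X = D1 u p X" and "hess v p X X \<le> hess u p X X"
    using smu smv assms(3,4) by force+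
qed

lemma inner_grad_x:
  assumes "smooth_on W w" "q \<in> W"
  shows "grad_x w q \<bullet> c = D1 w q (c, 0) - D1 w q (fst q, 0) * (fst q \<bullet> c)"
proof -
  have "grad_x w q \<bullet> c = amb_grad_x w q \<bullet> c - (amb_grad_x w q \<bullet> fst q) * (fst q \<bullet> c)"
    unfolding grad_x_def by (simp add: inner_diff_left)
  then show ?thesis
    using inner_amb_grad_x[OF assms, of c] inner_amb_grad_x[OF assms, of "fst q"] by (simp add: inner_commute)
qed

lemma inner_grad_y:
  assumes "smooth_on W w" "q \<in> W"
  shows "grad_y w q \<bullet> c = D1 w q (0, c) - D1 w q (0, snd q) * (snd q \<bullet> c)"
proof -
  have "grad_y w q \<bullet> c = amb_grad_y w q \<bullet> c - (amb_grad_y w q \<bullet> snd q) * (snd q \<bullet> c)"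
    unfolding grad_y_def by (simp add: inner_diff_left)
  then show ?thesis
    using inner_amb_grad_y[OF assms, of c] inner_amb_grad_y[OF assms, of "snd q"] by (simp add: inner_commute)
qed

text \<open>Both gradients are tangent, so their difference is detected by tangent directions.\<close>

lemma grad_eq_of_D1_eq:
  assumes smu: "smooth_on U u" and smv: "smooth_on V v" and pU: "p \<in> U" and pV: "p \<in> V"
    and "p \<in> sphere_prod" and eq: "\<And>X. X \<in> tangent p \<Longrightarrow> D1 v p X = D1 u p X"
  shows "grad_x v p = grad_x u p" and "grad_y v p = grad_y u p"
proof -
  have nx: "fst p \<bullet> fst p = 1" and ny: "snd p \<bullet> snd p = 1"
    using \<open>p \<in> sphere_prod\<close> unfolding sphere_prod_def by (auto simp: dot_square_norm)
  define z where "z = grad_x v p - grad_x u p"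
  have "fst p \<bullet> z = 0"
    using inner_grad_x[OF smv pV, of "fst p"] inner_grad_x[OF smu pU, of "fst p"] nx
    by (simp add: z_def inner_diff_right inner_commute)
  then have "z \<bullet> z = 0"
    using eq[of "(z, 0)"] inner_grad_x[OF smv pV, of z] inner_grad_x[OF smu pU, of z]
    by (simp add: z_def tangent_def inner_diff_left inner_commute)
  then show "grad_x v p = grad_x u p"
    by (simp add: z_def)
  define z' where "z' = grad_y v p - grad_y u p"
  have "snd p \<bullet> z' = 0"
    using inner_grad_y[OF smv pV, of "snd p"] inner_grad_y[OF smu pU, of "snd p"] ny
    by (simp add: z'_def inner_diff_right inner_commute)
  then have "z' \<bullet> z' = 0"
    using eq[of "(0, z')"] inner_grad_y[OF smv pV, of z'] inner_grad_y[OF smu pU, of z']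
    by (simp add: z'_def tangent_def inner_diff_left inner_commute)
  then show "grad_y v p = grad_y u p"
    by (simp add: z'_def)
qed

lemma local_max_diff_Mform_le:
  fixes u v :: "(real^'a) \<times> (real^'b) \<Rightarrow> real"
  assumes "smooth_on U u" "smooth_on V v" "p \<in> U" "p \<in> V" "p \<in> sphere_prod" "open T" "p \<in> T"
    and "\<And>q. q \<in> T \<Longrightarrow> q \<in> sphere_prod \<Longrightarrow> v q - u q \<le> v p - u p"
  shows "grad_x v p = grad_x u p" and "grad_y v p = grad_y u p"
    and "X \<in> tangent p \<Longrightarrow> Mform v p X X \<le> Mform u p X X"
proof -
  note first_second = local_max_diff_first_second_order[OF assms(1-5) _ assms(6-8)]
  show "grad_x v p = grad_x u p" and "grad_y v p = grad_y u p"
    using grad_eq_of_D1_eq[OF assms(1-5) first_second(1)] by blast+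
  then show "X \<in> tangent p \<Longrightarrow> Mform v p X X \<le> Mform u p X X"
    using first_second(2) by (simp add: Mform_def)
qed

lemma subspace_tangent: "subspace (tangent p)"
  unfolding tangent_def subspace_def by (auto simp: inner_add_left zero_prod_def)

lemma dim_tangent:
  fixes p :: "(real^'a) \<times> (real^'b)"
  assumes "p \<in> sphere_prod"
  shows "dim (tangent p) = tdim TYPE('a \<times> 'b)"
proof -
  define N where "N = {(fst p, 0::real^'b), (0::real^'a, snd p)}"
  have "fst p \<noteq> 0" "snd p \<noteq> 0"
    using assms unfolding sphere_prod_def by auto
  then have "independent N"
    by (intro pairwise_orthogonal_independent) (auto simp: N_def pairwise_def orthogonal_def zero_prod_def)
  moreover have "card N = 2"
    using \<open>fst p \<noteq> 0\<close> by (simp add: N_def)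
  ultimately have "dim (span N) = 2"
    using dim_eq_card_independent[of N] by simp
  have "{z \<in> UNIV. \<forall>n \<in> span N. orthogonal n z} = {z. \<forall>n \<in> N. orthogonal n z}"
  proof (intro Set.set_eqI HOL.iffI)
    fix z
    assume "z \<in> {z \<in> UNIV. \<forall>n \<in> span N. orthogonal n z}"
    then show "z \<in> {z. \<forall>n \<in> N. orthogonal n z}"
      using span_base[of _ N] by auto
  next
    fix z
    assume z: "z \<in> {z. \<forall>n \<in> N. orthogonal n z}"
    have "orthogonal z n" if "n \<in> span N" for n
      by (rule orthogonal_to_span[OF that]) (use z in \<open>auto simp: orthogonal_commute\<close>)
    then show "z \<in> {z \<in> UNIV. \<forall>n \<in> span N. orthogonal n z}"
      by (simp add: orthogonal_commute)
  qed
  also have "\<dots> = tangent p"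
    unfolding N_def tangent_def orthogonal_def by (auto simp: inner_commute)
  finally have "dim (tangent p) + dim (span N) = dim (UNIV :: ((real^'a) \<times> (real^'b)) set)"
    using dim_subspace_orthogonal_to_vectors[of "span N" UNIV] by auto
  with \<open>dim (span N) = 2\<close> show ?thesis
    unfolding tdim_def by simp
qed

lemma is_onframe_SOME:
  fixes p :: "(real^'a) \<times> (real^'b)"
  assumes "p \<in> sphere_prod"
  shows "is_onframe p (SOME e. is_onframe p e)"
proof -
  obtain B where B: "B \<subseteq> tangent p" "pairwise orthogonal B" "\<And>x. x \<in> B \<Longrightarrow> norm x = 1"
     "independent B" "card B = dim (tangent p)" "span B = tangent p"
    using orthonormal_basis_subspace[OF subspace_tangent] by blast
  define d where "d = tdim TYPE('a \<times> 'b)"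
  have "finite B" "card B = d"
    using B(4,5) dim_tangent[OF assms] independent_imp_finite unfolding d_def by auto
  then obtain e where e: "bij_betw e {..<d} B"
    using ex_bij_betw_nat_finite[of B] by (auto simp: atLeast0LessThan)
  then have img: "e ` {..<d} = B" and inj: "inj_on e {..<d}"
    unfolding bij_betw_def by auto
  have "e i \<bullet> e j = (if i = j then 1 else 0)" if "i < d" "j < d" for i j
  proof (cases "i = j")
    case True
    with that img B(3)[of "e i"] show ?thesis
      by (auto simp: dot_square_norm)
  next
    case False
    with that inj have "e i \<noteq> e j"
      unfolding inj_on_def by blast
    with that img B(2) False show ?thesis
      unfolding pairwise_def orthogonal_def by auto
  qed
  with img B(1,6) have "is_onframe p e"
    unfolding is_onframe_def d_def[symmetric] by blast
  then show ?thesis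
    by (rule someI[where P = "is_onframe p"])
qed

section \<open>Determinants of ordered positive definite forms\<close>

text \<open>Square matrices of size \<open>n\<close> are functions \<open>nat \<Rightarrow> nat \<Rightarrow> real\<close> read on \<open>{..<n}\<close>, as in
  the definition of \<open>detM\<close>.\<close>

definition leibniz_det :: "nat \<Rightarrow> (nat \<Rightarrow> nat \<Rightarrow> real) \<Rightarrow> real" where
  "leibniz_det n A = (\<Sum>\<sigma> | \<sigma> permutes {..<n}. of_int (sign \<sigma>) * (\<Prod>i<n. A i (\<sigma> i)))"

definition quad_form :: "nat \<Rightarrow> (nat \<Rightarrow> nat \<Rightarrow> real) \<Rightarrow> (nat \<Rightarrow> real) \<Rightarrow> real" where
  "quad_form n A x = (\<Sum>i<n. \<Sum>j<n. x i * A i j * x j)"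

definition first_row_form :: "nat \<Rightarrow> (nat \<Rightarrow> nat \<Rightarrow> real) \<Rightarrow> (nat \<Rightarrow> real) \<Rightarrow> real" where
  "first_row_form n A y = (\<Sum>j<n. A 0 (Suc j) * y j)"

definition schur_compl :: "(nat \<Rightarrow> nat \<Rightarrow> real) \<Rightarrow> nat \<Rightarrow> nat \<Rightarrow> real" where
  "schur_compl A i j = A (Suc i) (Suc j) - A (Suc i) 0 * A 0 (Suc j) / A 0 0"

lemma leibniz_det_eq_det: "leibniz_det n A = Determinant.det (Matrix.mat n n (\<lambda>(i, j). A i j))"
proof -
  have "Determinant.det (Matrix.mat n n (\<lambda>(i, j). A i j)) =
     (\<Sum>\<sigma> | \<sigma> permutes {0..<n}. of_int (sign \<sigma>) * (\<Prod>i = 0..<n. Matrix.mat n n (\<lambda>(i, j). A i j) $$ (i, \<sigma> i)))"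
    by (rule det_def') simp
  also have "\<dots> = leibniz_det n A"
    unfolding leibniz_det_def atLeast0LessThan
  proof (rule sum.cong[OF refl])
    fix \<sigma>
    assume "\<sigma> \<in> {\<sigma>. \<sigma> permutes {..<n}}"
    then have "\<sigma> permutes {..<n}"
      by simp
    then show "of_int (sign \<sigma>) * (\<Prod>i<n. Matrix.mat n n (\<lambda>(i, j). A i j) $$ (i, \<sigma> i))
        = of_int (sign \<sigma>) * (\<Prod>i<n. A i (\<sigma> i))"
      using permutes_in_image[OF \<open>\<sigma> permutes {..<n}\<close>] by (intro arg_cong[where f="\<lambda>x. _ * x"] prod.cong) auto
  qed
  finally show ?thesis
    by simp
qed

text \<open>Eliminating the first column with a unimodular lower triangular matrix.\<close>

lemma leibniz_det_Suc_schur_compl: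
  assumes "A 0 0 \<noteq> 0"
  shows "leibniz_det (Suc n) A = A 0 0 * leibniz_det n (schur_compl A)"
proof -
  define M where "M = Matrix.mat (Suc n) (Suc n) (\<lambda>(i, j). A i j)"
  define E where "E = Matrix.mat (Suc n) (Suc n)
    (\<lambda>(i, j). if i = j then 1 else if j = 0 then - A i 0 / A 0 0 else (0::real))"
  have M: "M \<in> carrier_mat (Suc n) (Suc n)" and E: "E \<in> carrier_mat (Suc n) (Suc n)"
    unfolding M_def E_def by auto
  have "Determinant.det E = prod_list (diag_mat E)"
    by (rule det_lower_triangular[OF _ E]) (auto simp: E_def)
  also have "\<dots> = 1"
    unfolding prod_list_diag_prod using E by (intro prod.neutral) (auto simp: E_def)
  finally have det_E: "Determinant.det E = 1" .
  have EM: "E * M = four_block_mat (Matrix.mat 1 1 (\<lambda>_. A 0 0)) (Matrix.mat 1 n (\<lambda>(_, j). A 0 (Suc j)))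
             (0\<^sub>m n 1) (Matrix.mat n n (\<lambda>(i, j). schur_compl A i j))" (is "_ = ?R")
  proof (rule eq_matI)
    fix i j
    assume "i < dim_row ?R" "j < dim_col ?R"
    then have i: "i < Suc n" and j: "j < Suc n"
      by auto
    have "(E * M) $$ (i, j) = (\<Sum>k\<in>{0..<Suc n}. E $$ (i, k) * M $$ (k, j))"
      using i j E M by (simp add: scalar_prod_def)
    also have "\<dots> = (\<Sum>k\<in>{0..<Suc n}. (if i = k then A i j else 0)
        + (if k = 0 \<and> i \<noteq> 0 then - A i 0 / A 0 0 * A 0 j else 0))"
      using i j by (intro sum.cong) (auto simp: E_def M_def)
    also have "\<dots> = A i j + (if i \<noteq> 0 then - A i 0 / A 0 0 * A 0 j else 0)"
      using i by (simp add: sum.distrib)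
    finally show "(E * M) $$ (i, j) = ?R $$ (i, j)"
      using i j assms
      by (cases i; cases j) (auto simp: four_block_mat_def schur_compl_def Let_def field_simps)
  qed (use E M in auto)
  have "Determinant.det (Matrix.mat 1 1 (\<lambda>_. A 0 0)) = prod_list (diag_mat (Matrix.mat 1 1 (\<lambda>_. A 0 0)))"
    by (rule det_lower_triangular[of 1]) auto
  then have det_1: "Determinant.det (Matrix.mat 1 1 (\<lambda>_. A 0 0)) = A 0 0"
    by (simp add: prod_list_diag_prod)
  have "leibniz_det (Suc n) A = Determinant.det M"
    unfolding M_def leibniz_det_eq_det ..
  also have "\<dots> = Determinant.det (E * M)"
    using det_mult[OF E M] det_E by simp
  also have "\<dots> = Determinant.det (Matrix.mat 1 1 (\<lambda>_. A 0 0))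
      * Determinant.det (Matrix.mat n n (\<lambda>(i, j). schur_compl A i j))"
    unfolding EM by (rule det_four_block_mat_lower_left_zero_col) auto
  also note det_1
  finally show ?thesis
    by (simp add: leibniz_det_eq_det)
qed

lemma quad_form_Suc:
  assumes sym: "\<And>i j. i < Suc n \<Longrightarrow> j < Suc n \<Longrightarrow> A i j = A j i"
  shows "quad_form (Suc n) A (case_nat t y)
    = A 0 0 * t\<^sup>2 + 2 * t * first_row_form n A y + quad_form n (\<lambda>i j. A (Suc i) (Suc j)) y"
proof -
  have s1: "(\<Sum>i<n. y i * A (Suc i) 0 * t) = t * first_row_form n A y"
    unfolding first_row_form_def sum_distrib_left
    by (intro sum.cong refl) (use sym in \<open>auto simp: mult_ac\<close>)
  have s2: "(\<Sum>j<n. t * A 0 (Suc j) * y j) = t * first_row_form n A y"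
    unfolding first_row_form_def sum_distrib_left by (simp add: mult_ac)
  have s3: "(\<Sum>i<n. t * (y i * A 0 (Suc i))) = t * first_row_form n A y"
    unfolding first_row_form_def sum_distrib_left by (simp add: mult_ac)
  have s4: "(\<Sum>i<n. t * (y i * A (Suc i) 0)) = t * first_row_form n A y"
    unfolding first_row_form_def sum_distrib_left
    by (intro sum.cong refl) (use sym in \<open>auto simp: mult_ac\<close>)
  show ?thesis
    unfolding quad_form_def sum.lessThan_Suc_shift
    by (simp add: sum.distrib s1 s2 power2_eq_square algebra_simps s3 s4)
qed

text \<open>Completing the square in the first variable.\<close>

lemma quad_form_schur_compl:
  assumes sym: "\<And>i j. i < Suc n \<Longrightarrow> j < Suc n \<Longrightarrow> A i j = A j i"
  shows "quad_form n (schur_compl A) y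
    = quad_form n (\<lambda>i j. A (Suc i) (Suc j)) y - (first_row_form n A y)\<^sup>2 / A 0 0"
proof -
  have col: "(\<Sum>i<n. y i * A (Suc i) 0) = first_row_form n A y"
    unfolding first_row_form_def by (intro sum.cong refl) (use sym in \<open>auto simp: mult_ac\<close>)
  have "quad_form n (schur_compl A) y = quad_form n (\<lambda>i j. A (Suc i) (Suc j)) y
      - (\<Sum>i<n. \<Sum>j<n. (y i * A (Suc i) 0) * (A 0 (Suc j) * y j) / A 0 0)"
    unfolding quad_form_def schur_compl_def
    by (simp add: algebra_simps sum_subtractf diff_divide_distrib)
  also have "(\<Sum>i<n. \<Sum>j<n. (y i * A (Suc i) 0) * (A 0 (Suc j) * y j) / A 0 0)
      = (\<Sum>i<n. y i * A (Suc i) 0) * (\<Sum>j<n. A 0 (Suc j) * y j) / A 0 0"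
    by (simp add: sum_product sum_divide_distrib)
  finally show ?thesis
    by (simp add: col first_row_form_def power2_eq_square)
qed

text \<open>The Schur complements inherit positivity and the order, since minimising over the first
  variable turns \<open>quad_form (Suc n)\<close> into the quadratic form of the Schur complement.\<close>

lemma leibniz_det_pos_mono:
  assumes "\<And>i j. i < n \<Longrightarrow> j < n \<Longrightarrow> A i j = A j i"
    and "\<And>i j. i < n \<Longrightarrow> j < n \<Longrightarrow> B i j = B j i"
    and "\<And>x. \<exists>i<n. x i \<noteq> 0 \<Longrightarrow> 0 < quad_form n A x"
    and "\<And>x. quad_form n A x \<le> quad_form n B x"
  shows "0 < leibniz_det n A \<and> leibniz_det n A \<le> leibniz_det n B"
  using assms
proof (induction n arbitrary: A B)
  case 0
  then show ?case
    by (simp add: leibniz_det_def)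
next
  case (Suc n)
  note symA = Suc.prems(1) and symB = Suc.prems(2) and pos = Suc.prems(3) and le = Suc.prems(4)
  note QA = quad_form_Suc[OF symA] and QB = quad_form_Suc[OF symB]
  have "quad_form n C (\<lambda>_. 0) = 0" "first_row_form n C (\<lambda>_. 0) = 0" for C
    by (simp_all add: quad_form_def first_row_form_def)
  then have e0: "quad_form (Suc n) A (case_nat 1 (\<lambda>_. 0)) = A 0 0"
    "quad_form (Suc n) B (case_nat 1 (\<lambda>_. 0)) = B 0 0"
    by (simp_all add: QA QB)
  have "0 < A 0 0"
    using pos[of "case_nat 1 (\<lambda>_. 0)"] by (force simp: e0)
  moreover have "A 0 0 \<le> B 0 0"
    using le[of "case_nat 1 (\<lambda>_. 0)"] by (simp add: e0)
  ultimately have "0 < B 0 0"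
    by linarith
  have SA: "quad_form n (schur_compl A) y = quad_form (Suc n) A (case_nat (- first_row_form n A y / A 0 0) y)"
    and SB: "quad_form n (schur_compl B) y = quad_form (Suc n) B (case_nat (- first_row_form n B y / B 0 0) y)" for y
    using \<open>0 < A 0 0\<close> \<open>0 < B 0 0\<close>
    by (simp_all add: QA QB quad_form_schur_compl[OF symA] quad_form_schur_compl[OF symB]
        power2_eq_square field_simps)
  have SA_le: "quad_form n (schur_compl A) y \<le> quad_form (Suc n) A (case_nat t y)" for t y
  proof -
    have "0 \<le> (A 0 0 * t + first_row_form n A y)\<^sup>2 / A 0 0"
      using \<open>0 < A 0 0\<close> by simp
    also have "\<dots> = A 0 0 * t\<^sup>2 + 2 * t * first_row_form n A y + (first_row_form n A y)\<^sup>2 / A 0 0"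
      using \<open>0 < A 0 0\<close> by (simp add: power2_eq_square field_simps)
    finally show ?thesis
      by (simp add: QA quad_form_schur_compl[OF symA])
  qed
  have "0 < leibniz_det n (schur_compl A) \<and> leibniz_det n (schur_compl A) \<le> leibniz_det n (schur_compl B)"
  proof (rule Suc.IH)
    fix i j
    assume "i < n" "j < n"
    then show "schur_compl A i j = schur_compl A j i" and "schur_compl B i j = schur_compl B j i"
      unfolding schur_compl_def
      using symA[of "Suc i" "Suc j"] symA[of 0 "Suc j"] symA[of "Suc i" 0]
        symB[of "Suc i" "Suc j"] symB[of 0 "Suc j"] symB[of "Suc i" 0]
      by (simp_all add: mult.commute)
  next
    fix y :: "nat \<Rightarrow> real"
    assume "\<exists>i<n. y i \<noteq> 0"
    then have "\<exists>k<Suc n. case_nat (- first_row_form n A y / A 0 0) y k \<noteq> 0"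
      by (metis Suc_less_eq nat.simps(5))
    then show "0 < quad_form n (schur_compl A) y"
      unfolding SA by (rule pos)
  next
    fix y
    show "quad_form n (schur_compl A) y \<le> quad_form n (schur_compl B) y"
      using SA_le le SB by (metis order_trans)
  qed
  with \<open>0 < A 0 0\<close> \<open>A 0 0 \<le> B 0 0\<close> show ?case
    by (simp add: leibniz_det_Suc_schur_compl mult_mono)
qed

lemma Mform_sym: "smooth_on W w \<Longrightarrow> p \<in> W \<Longrightarrow> Mform w p X Y = Mform w p Y X"
  unfolding Mform_def hess_def D2_def D1_def
  using frechet_derivative_second_symmetric[of W w p X Y]
  by (simp add: inner_commute mult.commute)

lemma linear_Mform:
  assumes "smooth_on W w" "p \<in> W"
  shows "linear (Mform w p X)"
proof -
  have "linear (D2 w p X)"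
    unfolding D2_def[abs_def] D1_def
    by (rule linear_frechet_derivative_smooth_on[OF smooth_on_frechet_derivative[OF assms(1)] assms(2)])
  show ?thesis
  proof (rule linearI)
    fix y z
    show "Mform w p X (y + z) = Mform w p X y + Mform w p X z"
      unfolding Mform_def hess_def linear_add[OF \<open>linear (D2 w p X)\<close>]
      by (simp add: inner_add_right algebra_simps)
  next
    fix r :: real and y
    show "Mform w p X (r *\<^sub>R y) = r *\<^sub>R Mform w p X y"
      unfolding Mform_def hess_def linear_cmul[OF \<open>linear (D2 w p X)\<close>]
      by (simp add: algebra_simps)
  qed
qed

lemma detM_eq_leibniz_det:
  "detM w p = leibniz_det (tdim TYPE('a \<times> 'b))
     (\<lambda>i j. Mform w p ((SOME e. is_onframe p e) i) ((SOME e. is_onframe p e) j))"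
  for w :: "(real^'a) \<times> (real^'b) \<Rightarrow> real"
  unfolding detM_def leibniz_det_def Let_def by simp

lemma quad_form_Mform:
  assumes "smooth_on W w" "p \<in> W"
  shows "quad_form d (\<lambda>i j. Mform w p (e i) (e j)) x
    = Mform w p (\<Sum>j<d. x j *\<^sub>R e j) (\<Sum>j<d. x j *\<^sub>R e j)"
proof -
  define Z where "Z = (\<Sum>j<d. x j *\<^sub>R e j)"
  note lin = linear_Mform[OF assms] and sym = Mform_sym[OF assms]
  have Z_left: "Mform w p Z Y = (\<Sum>i<d. x i * Mform w p (e i) Y)" for Y
  proof -
    have "Mform w p Z Y = Mform w p Y Z"
      by (rule sym)
    also have "\<dots> = (\<Sum>i<d. x i * Mform w p Y (e i))"
      unfolding Z_def linear_sum[OF lin] linear_cmul[OF lin] by simp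
    also have "\<dots> = (\<Sum>i<d. x i * Mform w p (e i) Y)"
      using sym by simp
    finally show ?thesis .
  qed
  have "Mform w p Z Z = (\<Sum>j<d. x j * Mform w p Z (e j))"
    by (subst (2) Z_def) (simp add: linear_sum[OF lin] linear_cmul[OF lin])
  also have "\<dots> = (\<Sum>j<d. \<Sum>i<d. x j * (x i * Mform w p (e i) (e j)))"
    unfolding Z_left by (simp add: sum_distrib_left)
  also have "\<dots> = quad_form d (\<lambda>i j. Mform w p (e i) (e j)) x"
    unfolding quad_form_def by (subst sum.swap) (simp add: mult_ac)
  finally show ?thesis
    unfolding Z_def ..
qed

lemma detM_pos_mono:
  fixes u v :: "(real^'a) \<times> (real^'b) \<Rightarrow> real"
  assumes smu: "smooth_on U u" and smv: "smooth_on V v" and pU: "p \<in> U" and pV: "p \<in> V"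
    and "p \<in> sphere_prod" and Mv: "M_posdef v p"
    and le: "\<And>X. X \<in> tangent p \<Longrightarrow> Mform v p X X \<le> Mform u p X X"
  shows "0 < detM v p" and "detM v p \<le> detM u p"
proof -
  define e where "e = (SOME e. is_onframe p e)"
  define d where "d = tdim TYPE('a \<times> 'b)"
  have on: "\<And>i j. i < d \<Longrightarrow> j < d \<Longrightarrow> e i \<bullet> e j = (if i = j then 1 else 0)"
    and span: "span (e ` {..<d}) = tangent p"
    using is_onframe_SOME[OF \<open>p \<in> sphere_prod\<close>] unfolding is_onframe_def e_def d_def by auto
  have tangent: "(\<Sum>j<d. x j *\<^sub>R e j) \<in> tangent p" for x
    unfolding span[symmetric] by (intro span_sum span_mul span_base) auto
  have coord: "(\<Sum>j<d. x j *\<^sub>R e j) \<bullet> e i = x i" if "i < d" for x i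
  proof -
    have "(\<Sum>j<d. x j *\<^sub>R e j) \<bullet> e i = (\<Sum>j<d. if j = i then x j else 0)"
      unfolding inner_sum_left by (intro sum.cong refl) (use on that in auto)
    then show ?thesis
      using that by simp
  qed
  have "0 < leibniz_det d (\<lambda>i j. Mform v p (e i) (e j))
    \<and> leibniz_det d (\<lambda>i j. Mform v p (e i) (e j)) \<le> leibniz_det d (\<lambda>i j. Mform u p (e i) (e j))"
  proof (rule leibniz_det_pos_mono)
    fix x :: "nat \<Rightarrow> real"
    assume "\<exists>i<d. x i \<noteq> 0"
    then obtain i where "i < d" "x i \<noteq> 0"
      by blast
    then have "(\<Sum>j<d. x j *\<^sub>R e j) \<noteq> 0"
      using coord[of i x] by auto
    then show "0 < quad_form d (\<lambda>i j. Mform v p (e i) (e j)) x"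
      using Mv tangent unfolding quad_form_Mform[OF smv pV] M_posdef_def by blast
  next
    fix x
    show "quad_form d (\<lambda>i j. Mform v p (e i) (e j)) x \<le> quad_form d (\<lambda>i j. Mform u p (e i) (e j)) x"
      unfolding quad_form_Mform[OF smv pV] quad_form_Mform[OF smu pU] using le tangent by blast
  qed (use Mform_sym[OF smv pV] Mform_sym[OF smu pU] in auto)
  then show "0 < detM v p" and "detM v p \<le> detM u p"
    unfolding detM_eq_leibniz_det e_def[symmetric] d_def[symmetric] by auto
qed

lemma strict_mono_below_of_deriv_pos:
  fixes g :: "real \<Rightarrow> real \<Rightarrow> real \<Rightarrow> real"
  assumes "smooth_on UNIV (\<lambda>(r, p, q). g r p q)"
    and "\<And>r p q. r \<le> r0 \<Longrightarrow> deriv (\<lambda>s. g s p q) r > 0"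
    and "r1 < r2" "r2 \<le> r0"
  shows "g r1 a b < g r2 a b"
proof -
  have "DERIV (\<lambda>s. g s a b) s :> deriv (\<lambda>s. g s a b) s" for s
  proof -
    have "((\<lambda>t. (t, a, b)) has_vector_derivative (1, 0, 0)) (at s)"
      by (auto intro!: derivative_eq_intros simp: zero_prod_def)
    from has_real_derivative_compose_curve[OF this smooth_on_has_derivative[OF assms(1) UNIV_I]]
    have "DERIV (\<lambda>s. g s a b) s :> frechet_derivative (\<lambda>(r, p, q). g r p q) (at (s, a, b)) (1, 0, 0)"
      by simp
    then show ?thesis
      using DERIV_imp_deriv by metis
  qed
  then obtain z where "r1 < z" "z < r2" and z: "g r2 a b - g r1 a b = (r2 - r1) * deriv (\<lambda>s. g s a b) z"
    using MVT2[OF \<open>r1 < r2\<close>, of "\<lambda>s. g s a b" "deriv (\<lambda>s. g s a b)"] by blast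
  have "deriv (\<lambda>s. g s a b) z > 0"
    using assms(2) \<open>z < r2\<close> \<open>r2 \<le> r0\<close> by simp
  with \<open>r1 < r2\<close> have "(r2 - r1) * deriv (\<lambda>s. g s a b) z > 0"
    by simp
  with z show ?thesis
    by simp
qed

lemma argmax_in_interior:
  fixes f :: "'a::heine_borel \<Rightarrow> real"
  assumes "bounded \<Omega>" and "continuous_on (closure \<Omega>) f"
    and "p \<in> \<Omega>" and "(SUP q\<in>closure \<Omega> - \<Omega>. f q) < f p"
  obtains m where "m \<in> \<Omega>" and "\<And>q. q \<in> closure \<Omega> \<Longrightarrow> f q \<le> f m"
proof -
  have "closure \<Omega> \<noteq> {}"
    using \<open>p \<in> \<Omega>\<close> closure_subset by blast
  then obtain m where m: "m \<in> closure \<Omega>" and max: "\<And>q. q \<in> closure \<Omega> \<Longrightarrow> f q \<le> f m"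
    using continuous_attains_sup[OF compact_closure[THEN iffD2, OF \<open>bounded \<Omega>\<close>] _ assms(2)] by blast
  have "m \<in> \<Omega>"
  proof (rule ccontr)
    assume "m \<notin> \<Omega>"
    then have "f m \<le> (SUP q\<in>closure \<Omega> - \<Omega>. f q)"
      using m max by (intro cSUP_upper bdd_aboveI2[of _ _ "f m"]) auto
    moreover have "f p \<le> f m"
      using max \<open>p \<in> \<Omega>\<close> closure_subset by blast
    ultimately show False
      using assms(4) by simp
  qed
  with max show ?thesis
    using that by blast
qed

lemma bounded_sphere_prod: "bounded sphere_prod"
  unfolding sphere_prod_def by (intro bounded_Times) auto

theorem lemma3p1:
  fixes \<Omega> :: "((real^'a) \<times> (real^'b)) set"
    and g :: "real \<Rightarrow> real \<Rightarrow> real \<Rightarrow> real"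
    and r0 :: real
    and u v :: "(real^'a) \<times> (real^'b) \<Rightarrow> real"
    and U V :: "((real^'a) \<times> (real^'b)) set"
  assumes dim_a: "CARD('a) \<ge> 2" and dim_b: "CARD('b) \<ge> 2"
    and dom_open: "openin (top_of_set sphere_prod) \<Omega>"
    and dom_conn: "connected \<Omega>" and dom_ne: "\<Omega> \<noteq> {}"
    and g_pos: "\<And>r p q. g r p q > 0"
    and g_smooth: "smooth_on UNIV (\<lambda>(r, p, q). g r p q)"
    and g_r: "\<And>r p q. r \<le> r0 \<Longrightarrow> deriv (\<lambda>s. g s p q) r > 0"
    and u_smooth: "smooth_on U u" and U_nbhd: "closure \<Omega> \<subseteq> U"
    and v_smooth: "smooth_on V v" and V_nbhd: "closure \<Omega> \<subseteq> V"
    and Mu: "\<And>p. p \<in> \<Omega> \<Longrightarrow> M_posdef u p"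
    and Mv: "\<And>p. p \<in> \<Omega> \<Longrightarrow> M_posdef v p"
    and u_le: "\<And>p. p \<in> \<Omega> \<Longrightarrow> u p \<le> r0"
    and v_le: "\<And>p. p \<in> \<Omega> \<Longrightarrow> v p \<le> r0"
    and G_le: "\<And>p. p \<in> \<Omega> \<Longrightarrow> Gop g u p \<le> Gop g v p"
  shows "(\<forall>p\<in>\<Omega>. v p - (SUP q\<in>closure \<Omega> - \<Omega>. v q - u q) \<le> u p)
         \<or> (\<forall>p\<in>\<Omega>. v p \<le> u p)"
proof (rule ccontr)
  assume "\<not> ?thesis"
  then obtain p1 p2 where "p1 \<in> \<Omega>" and p1_gt: "(SUP q\<in>closure \<Omega> - \<Omega>. v q - u q) < v p1 - u p1"
    and "p2 \<in> \<Omega>" "u p2 < v p2"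
    by (auto simp: not_le)
  obtain T where T: "open T" "\<Omega> = sphere_prod \<inter> T"
    using dom_open unfolding openin_open by blast
  have "continuous_on (closure \<Omega>) (\<lambda>q. v q - u q)"
    using continuous_on_subset[OF smooth_on_continuous_on[OF v_smooth] V_nbhd]
      continuous_on_subset[OF smooth_on_continuous_on[OF u_smooth] U_nbhd]
    by (rule continuous_on_diff)
  then obtain p where "p \<in> \<Omega>" and max: "\<And>q. q \<in> closure \<Omega> \<Longrightarrow> v q - u q \<le> v p - u p"
    using argmax_in_interior[OF bounded_subset[OF bounded_sphere_prod] _ \<open>p1 \<in> \<Omega>\<close> p1_gt] T(2)
    by blast
  have "p \<in> U" "p \<in> V" "p \<in> sphere_prod" "p \<in> T"
    using \<open>p \<in> \<Omega>\<close> U_nbhd V_nbhd closure_subset[of \<Omega>] T(2) by blast+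
  have "\<And>q. q \<in> T \<Longrightarrow> q \<in> sphere_prod \<Longrightarrow> v q - u q \<le> v p - u p"
    using max T closure_subset by blast
  note at_max = local_max_diff_Mform_le[OF u_smooth v_smooth \<open>p \<in> U\<close> \<open>p \<in> V\<close> \<open>p \<in> sphere_prod\<close>
      T(1) \<open>p \<in> T\<close> this]
  note det = detM_pos_mono[OF u_smooth v_smooth \<open>p \<in> U\<close> \<open>p \<in> V\<close> \<open>p \<in> sphere_prod\<close> Mv[OF \<open>p \<in> \<Omega>\<close>] at_max(3)]
  define a b where "a = sq_grad_x v p" and "b = sq_grad_y v p"
  have "v p2 - u p2 \<le> v p - u p"
    using max \<open>p2 \<in> \<Omega>\<close> closure_subset by blast
  with \<open>u p2 < v p2\<close> have "u p < v p"
    by linarith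
  then have "g (u p) a b < g (v p) a b"
    using strict_mono_below_of_deriv_pos[OF g_smooth g_r _ v_le[OF \<open>p \<in> \<Omega>\<close>]] by blast
  then have "Gop g v p < Gop g u p"
    using det g_pos[of "u p" a b] at_max(1,2)
    by (simp add: Gop_def a_def b_def sq_grad_x_def sq_grad_y_def frac_less2)
  with G_le[OF \<open>p \<in> \<Omega>\<close>] show False
    by simp
qed

end
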